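(* Let $M$ and $M'$ be two stable matchings in an instance $I$ of SPA-S, and let $M^\land$ be the assignment defined from $M,M'$ in the context. Then $M^\land$ is a matching.
   Context: An instance $I$ of SPA-S consists of a finite set $\mathcal{S}$ of students, a finite set $\mathcal{P}$ of projects and a finite set $\mathcal{L}$ of lecturers. Each student $s_i$ ranks a subset $A_i\subseteq\mathcal{P}$ (its acceptable projects) in strict order. Each project is offered by exactly one lecturer; lecturer $l_k$ offers a nonempty set $P_k\subseteq\mathcal{P}$, the $P_k$ partitioning $\mathcal{P}$. Each lecturer $l_k$ ranks in strict order the students who find at least one project of $P_k$ acceptable. Projects have capacities $c_j\in\mathbb{Z}^+$, lecturers have capacities $d_k\in\mathbb{Z}^+$ with $\max\{c_j:p_j\in P_k\}\le d_k\le\sum\{c_j:p_j\in P_k\}$. A pair $(s_i,p_j)$, $p_j$ offered by $l_k$, is acceptable if $p_j\in A_i$ and $s_i$ is on $l_k$'s list. A matching $M$ is a set of acceptable pairs with each student in at most one pair, $|M(p_j)|\le c_j$, $|M(l_k)|\le d_k$, where for an assignment $M$ (a set of acceptable pairs), $M(s_i)$, $M(p_j)$, $M(l_k)$ denote the project of $s_i$, the students assigned to $p_j$, and the students assigned to projects of $l_k$. Undersubscribed/full means fewer than/exactly capacity many assigned students. An acceptable pair $(s_i,p_j)\notin M$ ($p_j$ offered by $l_k$) blocks $M$ if ($s_i$ is unassigned or prefers $p_j$ to $M(s_i)$) and one of: (P1) $p_j$ and $l_k$ undersubscribed; (P2) $p_j$ undersubscribed, $l_k$ full, $s_i\in M(l_k)$;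 (P3) $p_j$ undersubscribed, $l_k$ full, $l_k$ prefers $s_i$ to the worst student of $M(l_k)$; (P4) $p_j$ full and $l_k$ prefers $s_i$ to the worst student of $M(p_j)$. $M$ is stable if it has no blocking pair. Given stable matchings $M,M'$, $M^\land$ is the assignment in which each student unassigned in both $M$ and $M'$ is unassigned, each student assigned to the same project in both is assigned to that project, and every other student is assigned to the better (in her preference) of her projects in $M$ and $M'$. *)

theory Defs
  imports Main
begin

text \<open>Students have type 's, projects 'p, lecturers 'l.
  stu_pref I s p q  means: student s prefers project p to project q (strict).
  lec_pref I l s t  means: lecturer l prefers student s to student t (strict).\<close>

record ('s, 'p, 'l) spa =
  students :: "'s set"
  projects :: "'p set"
  lecturers :: "'l set"
  acc :: "'s \<Rightarrow> 'p set"
  stu_pref :: "'s \<Rightarrow> 'p \<Rightarrow> 'p \<Rightarrow> bool"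
  offerer :: "'p \<Rightarrow> 'l"
  lec_pref :: "'l \<Rightarrow> 's \<Rightarrow> 's \<Rightarrow> bool"
  pcap :: "'p \<Rightarrow> nat"
  lcap :: "'l \<Rightarrow> nat"

definition strict_total_on :: "'a set \<Rightarrow> ('a \<Rightarrow> 'a \<Rightarrow> bool) \<Rightarrow> bool" where
  "strict_total_on X R \<longleftrightarrow>
     (\<forall>x y. R x y \<longrightarrow> x \<in> X \<and> y \<in> X) \<and>
     (\<forall>x\<in>X. \<not> R x x) \<and>
     (\<forall>x\<in>X. \<forall>y\<in>X. \<forall>z\<in>X. R x y \<longrightarrow> R y z \<longrightarrow> R x z) \<and>
     (\<forall>x\<in>X. \<forall>y\<in>X. x \<noteq> y \<longrightarrow> R x y \<or> R y x)"

definition offered :: "('s, 'p, 'l) spa \<Rightarrow> 'l \<Rightarrow> 'p set" where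
  "offered I l = {p \<in> projects I. offerer I p = l}"

definition lec_list :: "('s, 'p, 'l) spa \<Rightarrow> 'l \<Rightarrow> 's set" where
  "lec_list I l = {s \<in> students I. \<exists>p \<in> acc I s. offerer I p = l}"

definition spa_instance :: "('s, 'p, 'l) spa \<Rightarrow> bool" where
  "spa_instance I \<longleftrightarrow>
     finite (students I) \<and> finite (projects I) \<and> finite (lecturers I) \<and>
     (\<forall>s \<in> students I. acc I s \<subseteq> projects I \<and> strict_total_on (acc I s) (stu_pref I s)) \<and>
     (\<forall>p \<in> projects I. offerer I p \<in> lecturers I \<and> pcap I p > 0) \<and>
     (\<forall>l \<in> lecturers I. offered I l \<noteq> {} \<and>
        strict_total_on (lec_list I l) (lec_pref I l) \<and>
        Max (pcap I ` offered I l) \<le> lcap I l \<and>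
        lcap I l \<le> (\<Sum>p \<in> offered I l. pcap I p))"

definition acceptable_pair :: "('s, 'p, 'l) spa \<Rightarrow> 's \<Rightarrow> 'p \<Rightarrow> bool" where
  "acceptable_pair I s p \<longleftrightarrow> s \<in> students I \<and> p \<in> projects I \<and> p \<in> acc I s
      \<and> s \<in> lec_list I (offerer I p)"

definition assigned :: "('s \<times> 'p) set \<Rightarrow> 's \<Rightarrow> bool" where
  "assigned M s \<longleftrightarrow> (\<exists>p. (s, p) \<in> M)"

definition proj_of :: "('s \<times> 'p) set \<Rightarrow> 's \<Rightarrow> 'p" where
  "proj_of M s = (THE p. (s, p) \<in> M)"

definition studs_of_proj :: "('s \<times> 'p) set \<Rightarrow> 'p \<Rightarrow> 's set" where
  "studs_of_proj M p = {s. (s, p) \<in> M}"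

definition studs_of_lec :: "('s, 'p, 'l) spa \<Rightarrow> ('s \<times> 'p) set \<Rightarrow> 'l \<Rightarrow> 's set" where
  "studs_of_lec I M l = {s. \<exists>p. (s, p) \<in> M \<and> offerer I p = l}"

definition is_matching :: "('s, 'p, 'l) spa \<Rightarrow> ('s \<times> 'p) set \<Rightarrow> bool" where
  "is_matching I M \<longleftrightarrow>
     (\<forall>(s, p) \<in> M. acceptable_pair I s p) \<and>
     (\<forall>s p q. (s, p) \<in> M \<longrightarrow> (s, q) \<in> M \<longrightarrow> p = q) \<and>
     (\<forall>p \<in> projects I. card (studs_of_proj M p) \<le> pcap I p) \<and>
     (\<forall>l \<in> lecturers I. card (studs_of_lec I M l) \<le> lcap I l)"

definition proj_under :: "('s, 'p, 'l) spa \<Rightarrow> ('s \<times> 'p) set \<Rightarrow> 'p \<Rightarrow> bool" where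
  "proj_under I M p \<longleftrightarrow> card (studs_of_proj M p) < pcap I p"

definition proj_full :: "('s, 'p, 'l) spa \<Rightarrow> ('s \<times> 'p) set \<Rightarrow> 'p \<Rightarrow> bool" where
  "proj_full I M p \<longleftrightarrow> card (studs_of_proj M p) = pcap I p"

definition lec_under :: "('s, 'p, 'l) spa \<Rightarrow> ('s \<times> 'p) set \<Rightarrow> 'l \<Rightarrow> bool" where
  "lec_under I M l \<longleftrightarrow> card (studs_of_lec I M l) < lcap I l"

definition lec_full :: "('s, 'p, 'l) spa \<Rightarrow> ('s \<times> 'p) set \<Rightarrow> 'l \<Rightarrow> bool" where
  "lec_full I M l \<longleftrightarrow> card (studs_of_lec I M l) = lcap I l"

definition worst :: "('s, 'p, 'l) spa \<Rightarrow> 'l \<Rightarrow> 's set \<Rightarrow> 's" where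
  "worst I l X = (THE w. w \<in> X \<and> (\<forall>x \<in> X. x \<noteq> w \<longrightarrow> lec_pref I l x w))"

definition blocking_pair :: "('s, 'p, 'l) spa \<Rightarrow> ('s \<times> 'p) set \<Rightarrow> 's \<Rightarrow> 'p \<Rightarrow> bool" where
  "blocking_pair I M s p \<longleftrightarrow>
     (let l = offerer I p in
      acceptable_pair I s p \<and> (s, p) \<notin> M \<and>
      (\<not> assigned M s \<or> stu_pref I s p (proj_of M s)) \<and>
      ((proj_under I M p \<and> lec_under I M l) \<or>
       (proj_under I M p \<and> lec_full I M l \<and> s \<in> studs_of_lec I M l) \<or>
       (proj_under I M p \<and> lec_full I M l \<and>
          lec_pref I l s (worst I l (studs_of_lec I M l))) \<or>
       (proj_full I M p \<and> lec_pref I l s (worst I l (studs_of_proj M p)))))"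

definition stable :: "('s, 'p, 'l) spa \<Rightarrow> ('s \<times> 'p) set \<Rightarrow> bool" where
  "stable I M \<longleftrightarrow> is_matching I M \<and> (\<forall>s p. \<not> blocking_pair I M s p)"

text \<open>M-wedge: each student gets the better (for her) of her projects in M and M'
  (the common one if equal; none if unassigned in both; the only one if assigned in just one).\<close>
definition meet :: "('s, 'p, 'l) spa \<Rightarrow> ('s \<times> 'p) set \<Rightarrow> ('s \<times> 'p) set \<Rightarrow> ('s \<times> 'p) set" where
  "meet I M M' = {(s, p). (s, p) \<in> M \<union> M' \<and>
                   (\<forall>q. (s, q) \<in> M \<union> M' \<longrightarrow> q = p \<or> stu_pref I s p q)}"

end

theory Submission
  imports Defs
begin

(* Call a student an N-improver if she prefers her assignment in N to that in M.
   If an N-improver t holds project q of lecturer l in N, then (t, q) does not block M, so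
   either q is full in M and l ranks all of M(q) above t, or l is full in M and ranks all of
   M(l) above t.  Consequently the meet at q lies inside M(q) or inside N(q): otherwise l
   would rank two students each above the other.  Comparing project by project, l also has
   no more N-improvers in N than in M.  Every student of the meet at l is shared by M and N
   at l, an M-improver in M(l), or an N-improver in N(l); hence the meet at l has at most
   |M(l)| <= d_l students. *)

section \<open>Strict total orders and worst students\<close>

lemma strict_total_on_irrefl: "strict_total_on X R \<Longrightarrow> \<not> R x x"
  unfolding strict_total_on_def by blast

lemma strict_total_on_trans: "strict_total_on X R \<Longrightarrow> R x y \<Longrightarrow> R y z \<Longrightarrow> R x z"
  unfolding strict_total_on_def by blast

lemma strict_total_on_asym: "strict_total_on X R \<Longrightarrow> R x y \<Longrightarrow> \<not> R y x"
  using strict_total_on_irrefl strict_total_on_trans by metis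

lemma strict_total_on_total:
  "strict_total_on X R \<Longrightarrow> x \<in> X \<Longrightarrow> y \<in> X \<Longrightarrow> x \<noteq> y \<Longrightarrow> R x y \<or> R y x"
  unfolding strict_total_on_def by blast

lemma strict_total_on_worst_exists:
  assumes sto: "strict_total_on X R" and "finite Y" "Y \<noteq> {}" "Y \<subseteq> X"
  shows "\<exists>w\<in>Y. \<forall>x\<in>Y. x \<noteq> w \<longrightarrow> R x w"
  using assms(2-4)
proof (induction Y rule: finite_ne_induct)
  case (singleton x)
  then show ?case by auto
next
  case (insert x F)
  then obtain w where w: "w \<in> F" "\<forall>y\<in>F. y \<noteq> w \<longrightarrow> R y w" by auto
  have "R x w \<or> R w x"
    using strict_total_on_total[OF sto, of x w] insert w by auto
  then show ?case
  proof
    assume "R x w"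
    then show ?thesis using w by auto
  next
    assume "R w x"
    have "\<forall>y\<in>insert x F. y \<noteq> x \<longrightarrow> R y x"
    proof (intro ballI impI)
      fix y
      assume "y \<in> insert x F" "y \<noteq> x"
      then show "R y x"
        using w \<open>R w x\<close> strict_total_on_trans[OF sto, of y w x] by (cases "y = w") auto
    qed
    then show ?thesis by blast
  qed
qed

lemma worst_spec:
  assumes sto: "strict_total_on (lec_list I l) (lec_pref I l)"
    and "finite Y" "Y \<noteq> {}" "Y \<subseteq> lec_list I l"
  shows "worst I l Y \<in> Y" and "\<And>x. x \<in> Y \<Longrightarrow> x \<noteq> worst I l Y \<Longrightarrow> lec_pref I l x (worst I l Y)"
proof -
  obtain w where w: "w \<in> Y" "\<forall>x\<in>Y. x \<noteq> w \<longrightarrow> lec_pref I l x w"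
    using strict_total_on_worst_exists[OF assms] by blast
  have "worst I l Y = w"
    unfolding worst_def
  proof (rule the_equality)
    fix w'
    assume w': "w' \<in> Y \<and> (\<forall>x\<in>Y. x \<noteq> w' \<longrightarrow> lec_pref I l x w')"
    show "w' = w"
    proof (rule ccontr)
      assume "w' \<noteq> w"
      then have "lec_pref I l w w'" "lec_pref I l w' w"
        using w w' by auto
      then show False
        using strict_total_on_asym[OF sto] by blast
    qed
  qed (use w in blast)
  then show "worst I l Y \<in> Y" and "\<And>x. x \<in> Y \<Longrightarrow> x \<noteq> worst I l Y \<Longrightarrow> lec_pref I l x (worst I l Y)"
    using w by auto
qed

lemma lec_pref_worstI:
  assumes sto: "strict_total_on (lec_list I l) (lec_pref I l)"
    and "finite Y" "Y \<subseteq> lec_list I l" "t \<in> Y" "lec_pref I l u t"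
  shows "lec_pref I l u (worst I l Y)"
proof -
  have "Y \<noteq> {}" using \<open>t \<in> Y\<close> by blast
  note w = worst_spec[OF sto \<open>finite Y\<close> this \<open>Y \<subseteq> lec_list I l\<close>]
  show ?thesis
  proof (cases "t = worst I l Y")
    case False
    then show ?thesis
      using w(2)[OF \<open>t \<in> Y\<close>] \<open>lec_pref I l u t\<close> strict_total_on_trans[OF sto] by blast
  qed (use \<open>lec_pref I l u t\<close> in simp)
qed

lemma all_pref_if_not_pref_worst:
  assumes sto: "strict_total_on (lec_list I l) (lec_pref I l)"
    and "finite Y" "Y \<noteq> {}" "Y \<subseteq> lec_list I l"
    and "t \<in> lec_list I l" "t \<notin> Y" "\<not> lec_pref I l t (worst I l Y)"
  shows "\<forall>u\<in>Y. lec_pref I l u t"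
proof
  fix u
  assume "u \<in> Y"
  let ?w = "worst I l Y"
  have "?w \<in> lec_list I l" "?w \<noteq> t"
    using worst_spec(1)[OF sto assms(2-4)] assms(4,6) by auto
  then have "lec_pref I l ?w t"
    using strict_total_on_total[OF sto _ assms(5)] assms(7) by blast
  then show "lec_pref I l u t"
  proof (cases "u = ?w")
    case False
    then show ?thesis
      using worst_spec(2)[OF sto assms(2-4) \<open>u \<in> Y\<close>] \<open>lec_pref I l ?w t\<close>
        strict_total_on_trans[OF sto] by blast
  qed simp
qed

lemma card_Diff_le_card_Diff:
  assumes "finite A" "finite B" "card A \<le> card B"
  shows "card (A - B) \<le> card (B - A)"
  using assms card_Diff_subset_Int[of A B] card_Diff_subset_Int[of B A] by (simp add: Int_commute)

section \<open>Matchings and the meet\<close>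

lemma stable_is_matching: "stable I M \<Longrightarrow> is_matching I M"
  unfolding stable_def by blast

lemma stable_not_blocking: "stable I M \<Longrightarrow> \<not> blocking_pair I M s p"
  unfolding stable_def by blast

lemma is_matching_acceptable: "is_matching I M \<Longrightarrow> (s, p) \<in> M \<Longrightarrow> acceptable_pair I s p"
  unfolding is_matching_def by blast

lemma is_matching_unique: "is_matching I M \<Longrightarrow> (s, p) \<in> M \<Longrightarrow> (s, q) \<in> M \<Longrightarrow> p = q"
  unfolding is_matching_def by blast

lemma is_matching_pcap:
  "is_matching I M \<Longrightarrow> p \<in> projects I \<Longrightarrow> card (studs_of_proj M p) \<le> pcap I p"
  unfolding is_matching_def by blast

lemma is_matching_lcap:
  "is_matching I M \<Longrightarrow> l \<in> lecturers I \<Longrightarrow> card (studs_of_lec I M l) \<le> lcap I l"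
  unfolding is_matching_def by blast

lemma proj_of_eq: "is_matching I M \<Longrightarrow> (s, p) \<in> M \<Longrightarrow> proj_of M s = p"
  unfolding proj_of_def by (blast intro: the_equality dest: is_matching_unique)

lemma assigned_proj_of: "is_matching I M \<Longrightarrow> assigned M s \<Longrightarrow> (s, proj_of M s) \<in> M"
  unfolding assigned_def using proj_of_eq by metis

lemma studs_of_proj_subset_lec_list:
  "is_matching I M \<Longrightarrow> studs_of_proj M p \<subseteq> lec_list I (offerer I p)"
  by (auto simp: studs_of_proj_def acceptable_pair_def dest: is_matching_acceptable)

lemma studs_of_lec_subset_lec_list: "is_matching I M \<Longrightarrow> studs_of_lec I M l \<subseteq> lec_list I l"
  by (auto simp: studs_of_lec_def acceptable_pair_def dest: is_matching_acceptable)

lemma studs_of_proj_subset_studs_of_lec: "studs_of_proj M p \<subseteq> studs_of_lec I M (offerer I p)"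
  unfolding studs_of_proj_def studs_of_lec_def by blast

definition stu_prefers :: "('s, 'p, 'l) spa \<Rightarrow> 's \<Rightarrow> ('s \<times> 'p) set \<Rightarrow> ('s \<times> 'p) set \<Rightarrow> bool" where
  "stu_prefers I s N M \<longleftrightarrow>
     assigned N s \<and> (\<not> assigned M s \<or> stu_pref I s (proj_of N s) (proj_of M s))"

definition shared_studs :: "('s, 'p, 'l) spa \<Rightarrow> ('s \<times> 'p) set \<Rightarrow> ('s \<times> 'p) set \<Rightarrow> 'l \<Rightarrow> 's set" where
  "shared_studs I M N l = {s. \<exists>p. offerer I p = l \<and> (s, p) \<in> M \<and> (s, p) \<in> N}"

lemma shared_studs_commute: "shared_studs I M N l = shared_studs I N M l"
  unfolding shared_studs_def by blast

lemma meet_commute: "meet I M N = meet I N M"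
  unfolding meet_def by (simp add: Un_commute)

lemma meet_acceptable:
  "is_matching I M \<Longrightarrow> is_matching I N \<Longrightarrow> (s, p) \<in> meet I M N \<Longrightarrow> acceptable_pair I s p"
  unfolding meet_def by (blast dest: is_matching_acceptable)

lemma meet_stu_prefers:
  assumes "is_matching I M" "is_matching I N"
    and "(s, p) \<in> meet I M N" "(s, p) \<in> M" "(s, p) \<notin> N"
  shows "stu_prefers I s M N"
proof -
  have "stu_pref I s p (proj_of N s)" if "assigned N s"
  proof -
    have "(s, proj_of N s) \<in> N" using assigned_proj_of[OF assms(2) that] .
    then show ?thesis
      using assms(3,5) unfolding meet_def by fastforce
  qed
  then show ?thesis
    using assms(1,4) proj_of_eq unfolding stu_prefers_def assigned_def by metis
qed

lemma meet_cases:
  assumes M: "is_matching I M" and N: "is_matching I N" and sp: "(s, p) \<in> meet I M N"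
  obtains "(s, p) \<in> M" "(s, p) \<in> N"
    | "(s, p) \<in> M" "(s, p) \<notin> N" "stu_prefers I s M N"
    | "(s, p) \<in> N" "(s, p) \<notin> M" "stu_prefers I s N M"
proof -
  have "(s, p) \<in> M \<or> (s, p) \<in> N"
    using sp unfolding meet_def by blast
  then show ?thesis
    using that meet_stu_prefers[OF M N sp] meet_stu_prefers[OF N M] sp meet_commute by metis
qed

context
  fixes I :: "('s, 'p, 'l) spa"
  assumes inst: "spa_instance I"
begin

lemma stu_pref_strict_total: "s \<in> students I \<Longrightarrow> strict_total_on (acc I s) (stu_pref I s)"
  using inst unfolding spa_instance_def by blast

lemma lec_pref_strict_total:
  "l \<in> lecturers I \<Longrightarrow> strict_total_on (lec_list I l) (lec_pref I l)"
  using inst unfolding spa_instance_def by blast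

lemma offerer_in_lecturers: "p \<in> projects I \<Longrightarrow> offerer I p \<in> lecturers I"
  using inst unfolding spa_instance_def by blast

lemma pcap_pos: "p \<in> projects I \<Longrightarrow> 0 < pcap I p"
  using inst unfolding spa_instance_def by blast

lemma finite_offered: "finite (offered I l)"
  using inst unfolding spa_instance_def offered_def by (elim conjE) simp

lemma Max_pcap_le_lcap: "l \<in> lecturers I \<Longrightarrow> Max (pcap I ` offered I l) \<le> lcap I l"
  using inst unfolding spa_instance_def by (elim conjE) (drule (1) bspec, elim conjE)

lemma pcap_le_lcap:
  assumes "p \<in> projects I"
  shows "pcap I p \<le> lcap I (offerer I p)"
proof -
  have "p \<in> offered I (offerer I p)"
    using assms unfolding offered_def by blast
  then have "pcap I p \<le> Max (pcap I ` offered I (offerer I p))"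
    using finite_offered by (intro Max_ge) auto
  also have "\<dots> \<le> lcap I (offerer I p)"
    using Max_pcap_le_lcap[OF offerer_in_lecturers[OF assms]] .
  finally show ?thesis .
qed

lemma finite_studs_of_lec: "is_matching I M \<Longrightarrow> finite (studs_of_lec I M l)"
proof (rule finite_subset)
  show "studs_of_lec I M l \<subseteq> students I" if "is_matching I M"
    using studs_of_lec_subset_lec_list[OF that] unfolding lec_list_def by blast
  show "finite (students I)"
    using inst unfolding spa_instance_def by (elim conjE)
qed

lemma finite_studs_of_proj: "is_matching I M \<Longrightarrow> finite (studs_of_proj M p)"
  by (rule finite_subset[OF studs_of_proj_subset_studs_of_lec finite_studs_of_lec])

lemma not_stu_prefers_same:
  assumes "is_matching I M" "is_matching I N" "(s, p) \<in> M" "(s, p) \<in> N"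
  shows "\<not> stu_prefers I s N M"
proof -
  have "s \<in> students I"
    using is_matching_acceptable[OF assms(1,3)] unfolding acceptable_pair_def by blast
  then have "\<not> stu_pref I s p p"
    using strict_total_on_irrefl[OF stu_pref_strict_total] by blast
  then show ?thesis
    unfolding stu_prefers_def assigned_def
    using assms(3) proj_of_eq[OF assms(1,3)] proj_of_eq[OF assms(2,4)] by auto
qed

lemma stu_prefers_swap:
  assumes "is_matching I M" "is_matching I N" "(s, p) \<in> M" "(s, p) \<notin> N"
  shows "stu_prefers I s N M \<longleftrightarrow> \<not> stu_prefers I s M N"
proof -
  have M: "assigned M s" "proj_of M s = p"
    using assms(3) proj_of_eq[OF assms(1,3)] unfolding assigned_def by blast+
  show ?thesis
  proof (cases "assigned N s")
    case True
    let ?q = "proj_of N s"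
    have "(s, ?q) \<in> N" using assigned_proj_of[OF assms(2) True] .
    then have "?q \<noteq> p" "?q \<in> acc I s"
      using assms(4) is_matching_acceptable[OF assms(2)] unfolding acceptable_pair_def by auto
    moreover have "p \<in> acc I s" "s \<in> students I"
      using is_matching_acceptable[OF assms(1,3)] unfolding acceptable_pair_def by auto
    ultimately have "stu_pref I s ?q p \<longleftrightarrow> \<not> stu_pref I s p ?q"
      using strict_total_on_total[OF stu_pref_strict_total, of s ?q p]
        strict_total_on_asym[OF stu_pref_strict_total, of s] by blast
    then show ?thesis
      using M True unfolding stu_prefers_def by simp
  next
    case False
    then show ?thesis
      using M unfolding stu_prefers_def by simp
  qed
qed

lemma meet_unique:
  assumes "is_matching I M" "is_matching I N" "(s, p) \<in> meet I M N" "(s, q) \<in> meet I M N"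
  shows "p = q"
proof -
  have "s \<in> students I"
    using meet_acceptable[OF assms(1-3)] unfolding acceptable_pair_def by blast
  then have "\<not> (stu_pref I s p q \<and> stu_pref I s q p)"
    using strict_total_on_asym[OF stu_pref_strict_total] by blast
  moreover have "p = q \<or> stu_pref I s p q" "q = p \<or> stu_pref I s q p"
    using assms(3,4) unfolding meet_def by auto
  ultimately show ?thesis by blast
qed

section \<open>Consequences of stability\<close>

lemma blocking_pair_if_outranks:
  assumes N: "is_matching I N" and acc: "acceptable_pair I u q" and uq: "(u, q) \<notin> N"
    and better: "\<not> assigned N u \<or> stu_pref I u q (proj_of N u)"
    and tq: "(t, q) \<in> N" and ut: "lec_pref I (offerer I q) u t"
  shows "blocking_pair I N u q"
proof -
  define l where "l = offerer I q"
  have q: "q \<in> projects I"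
    using acc unfolding acceptable_pair_def by blast
  have l: "l \<in> lecturers I"
    using offerer_in_lecturers[OF q] unfolding l_def .
  note sto = lec_pref_strict_total[OF l]
  have "(proj_under I N q \<and> lec_under I N l) \<or>
        (proj_under I N q \<and> lec_full I N l \<and> lec_pref I l u (worst I l (studs_of_lec I N l))) \<or>
        (proj_full I N q \<and> lec_pref I l u (worst I l (studs_of_proj N q)))"
  proof (cases "proj_full I N q")
    case True
    have "t \<in> studs_of_proj N q"
      using tq unfolding studs_of_proj_def by simp
    then have "lec_pref I l u (worst I l (studs_of_proj N q))"
      using lec_pref_worstI[OF sto finite_studs_of_proj[OF N]] studs_of_proj_subset_lec_list[OF N]
        ut unfolding l_def by blast
    with True show ?thesis by blast
  next
    case False
    then have under: "proj_under I N q"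
      using is_matching_pcap[OF N q] unfolding proj_full_def proj_under_def by simp
    show ?thesis
    proof (cases "lec_full I N l")
      case True
      have "t \<in> studs_of_lec I N l"
        using tq unfolding studs_of_lec_def l_def by blast
      then have "lec_pref I l u (worst I l (studs_of_lec I N l))"
        using lec_pref_worstI[OF sto finite_studs_of_lec[OF N] studs_of_lec_subset_lec_list[OF N]]
          ut unfolding l_def by blast
      with under True show ?thesis by blast
    next
      case False
      then have "lec_under I N l"
        using is_matching_lcap[OF N l] unfolding lec_full_def lec_under_def by simp
      with under show ?thesis by blast
    qed
  qed
  then show ?thesis
    using acc uq better unfolding blocking_pair_def Let_def l_def by blast
qed

lemma stable_improver_outranked:
  assumes M: "stable I M" and N: "is_matching I N"
    and tq: "(t, q) \<in> N" and improves: "stu_prefers I t N M"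
  shows "(proj_full I M q \<and> (\<forall>u\<in>studs_of_proj M q. lec_pref I (offerer I q) u t)) \<or>
         (proj_under I M q \<and> lec_full I M (offerer I q) \<and>
            (\<forall>u\<in>studs_of_lec I M (offerer I q). lec_pref I (offerer I q) u t))"
proof -
  define l where "l = offerer I q"
  have mM: "is_matching I M"
    using M by (rule stable_is_matching)
  have acc: "acceptable_pair I t q"
    using is_matching_acceptable[OF N tq] .
  have q: "q \<in> projects I" and t: "t \<in> lec_list I l"
    using acc unfolding acceptable_pair_def l_def by auto
  have l: "l \<in> lecturers I"
    using offerer_in_lecturers[OF q] unfolding l_def .
  note sto = lec_pref_strict_total[OF l]
  have tqM: "(t, q) \<notin> M"
    using not_stu_prefers_same[OF mM N _ tq] improves by blast
  have "\<not> assigned M t \<or> stu_pref I t q (proj_of M t)"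
    using improves proj_of_eq[OF N tq] unfolding stu_prefers_def by simp
  then have not_blocking: "\<not> ((proj_under I M q \<and> lec_under I M l) \<or>
       (proj_under I M q \<and> lec_full I M l \<and> t \<in> studs_of_lec I M l) \<or>
       (proj_under I M q \<and> lec_full I M l \<and> lec_pref I l t (worst I l (studs_of_lec I M l))) \<or>
       (proj_full I M q \<and> lec_pref I l t (worst I l (studs_of_proj M q))))"
    using stable_not_blocking[OF M, of t q] acc tqM unfolding blocking_pair_def Let_def l_def by blast
  have pos: "0 < pcap I q"
    using pcap_pos[OF q] .
  show ?thesis
  proof (cases "proj_full I M q")
    case True
    have "studs_of_proj M q \<noteq> {}"
      using True pos unfolding proj_full_def by auto
    moreover have "t \<notin> studs_of_proj M q"
      using tqM unfolding studs_of_proj_def by simp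
    ultimately have "\<forall>u\<in>studs_of_proj M q. lec_pref I l u t"
      using all_pref_if_not_pref_worst[OF sto finite_studs_of_proj[OF mM] _ _ t]
        studs_of_proj_subset_lec_list[OF mM] not_blocking True unfolding l_def by blast
    with True show ?thesis
      unfolding l_def by blast
  next
    case False
    then have under: "proj_under I M q"
      using is_matching_pcap[OF mM q] unfolding proj_full_def proj_under_def by simp
    then have full: "lec_full I M l"
      using not_blocking is_matching_lcap[OF mM l] unfolding lec_under_def lec_full_def by auto
    have "studs_of_lec I M l \<noteq> {}"
      using full pos pcap_le_lcap[OF q] unfolding lec_full_def l_def by auto
    moreover have "t \<notin> studs_of_lec I M l"
      using not_blocking under full by blast
    ultimately have "\<forall>u\<in>studs_of_lec I M l. lec_pref I l u t"
      using all_pref_if_not_pref_worst[OF sto finite_studs_of_lec[OF mM] _ studs_of_lec_subset_lec_list[OF mM] t]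
        not_blocking under full by blast
    with under full show ?thesis
      unfolding l_def by blast
  qed
qed

lemma stable_improver_outranked_proj:
  assumes "stable I M" "is_matching I N" "(t, q) \<in> N" "stu_prefers I t N M"
  shows "\<forall>u\<in>studs_of_proj M q. lec_pref I (offerer I q) u t"
  using stable_improver_outranked[OF assms] studs_of_proj_subset_studs_of_lec[of M q I] by blast

lemma stable_outranking_student_improves:
  assumes N: "stable I N" and M: "is_matching I M"
    and uqM: "(u, q) \<in> M" and uqN: "(u, q) \<notin> N"
    and tq: "(t, q) \<in> N" and ut: "lec_pref I (offerer I q) u t"
  shows "stu_prefers I u N M"
proof (rule ccontr)
  have mN: "is_matching I N"
    using N by (rule stable_is_matching)
  assume "\<not> stu_prefers I u N M"
  then have "stu_prefers I u M N"
    using stu_prefers_swap[OF M mN uqM uqN] by blast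
  then have "\<not> assigned N u \<or> stu_pref I u q (proj_of N u)"
    using proj_of_eq[OF M uqM] unfolding stu_prefers_def by simp
  then have "blocking_pair I N u q"
    using blocking_pair_if_outranks[OF mN is_matching_acceptable[OF M uqM] uqN _ tq ut] by blast
  then show False
    using stable_not_blocking[OF N] by blast
qed

lemma card_improvers_proj_le:
  assumes M: "stable I M" and N: "stable I N" and q: "q \<in> projects I"
    and outranked: "\<And>t. (t, q) \<in> N \<Longrightarrow> stu_prefers I t N M \<Longrightarrow>
      proj_full I M q \<and> (\<forall>u\<in>studs_of_proj M q. lec_pref I (offerer I q) u t)"
  shows "card {s \<in> studs_of_proj N q. stu_prefers I s N M}
    \<le> card {s \<in> studs_of_proj M q. stu_prefers I s N M}"
proof (cases "\<exists>t. (t, q) \<in> N \<and> stu_prefers I t N M")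
  case False
  then have "{s \<in> studs_of_proj N q. stu_prefers I s N M} = {}"
    unfolding studs_of_proj_def by blast
  then show ?thesis by (simp only: card.empty le0)
next
  case True
  then obtain t where tq: "(t, q) \<in> N" and improves: "stu_prefers I t N M"
    by blast
  have mM: "is_matching I M" and mN: "is_matching I N"
    using M N by (simp_all add: stable_is_matching)
  let ?M = "studs_of_proj M q" and ?N = "studs_of_proj N q"
  have "{s \<in> ?N. stu_prefers I s N M} \<subseteq> ?N - ?M"
    using not_stu_prefers_same[OF mM mN] unfolding studs_of_proj_def by blast
  then have "card {s \<in> ?N. stu_prefers I s N M} \<le> card (?N - ?M)"
    using finite_studs_of_proj[OF mN] by (intro card_mono) auto
  also have "\<dots> \<le> card (?M - ?N)"
    using card_Diff_le_card_Diff finite_studs_of_proj[OF mM] finite_studs_of_proj[OF mN]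
      is_matching_pcap[OF mN q] outranked[OF tq improves] unfolding proj_full_def by metis
  also have "?M - ?N \<subseteq> {s \<in> ?M. stu_prefers I s N M}"
    using stable_outranking_student_improves[OF N mM _ _ tq] outranked[OF tq improves]
    unfolding studs_of_proj_def by blast
  then have "card (?M - ?N) \<le> card {s \<in> ?M. stu_prefers I s N M}"
    using finite_studs_of_proj[OF mM] by (intro card_mono) auto
  finally show ?thesis .
qed

lemma card_studs_of_lec_filter:
  assumes K: "is_matching I K"
  shows "card {s \<in> studs_of_lec I K l. P s} = (\<Sum>q\<in>offered I l. card {s \<in> studs_of_proj K q. P s})"
proof -
  have partition: "{s \<in> studs_of_lec I K l. P s} = (\<Union>q\<in>offered I l. {s \<in> studs_of_proj K q. P s})"
    using is_matching_acceptable[OF K]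
    unfolding studs_of_lec_def studs_of_proj_def offered_def acceptable_pair_def by blast
  have "\<forall>i\<in>offered I l. \<forall>j\<in>offered I l. i \<noteq> j \<longrightarrow>
      {s \<in> studs_of_proj K i. P s} \<inter> {s \<in> studs_of_proj K j. P s} = {}"
    using is_matching_unique[OF K] unfolding studs_of_proj_def by blast
  then show ?thesis
    unfolding partition using finite_studs_of_proj[OF K]
    by (intro card_UN_disjoint[OF finite_offered]) auto
qed

lemma card_studs_of_lec_filter_mono:
  assumes "is_matching I M" "is_matching I N"
    and "\<And>q. q \<in> offered I l \<Longrightarrow>
      card {s \<in> studs_of_proj N q. P s} \<le> card {s \<in> studs_of_proj M q. P s}"
  shows "card {s \<in> studs_of_lec I N l. P s} \<le> card {s \<in> studs_of_lec I M l. P s}"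
  unfolding card_studs_of_lec_filter[OF assms(1)] card_studs_of_lec_filter[OF assms(2)]
  using assms(3) by (rule sum_mono)


lemma card_studs_of_lec_split:
  assumes M: "is_matching I M" and N: "is_matching I N"
  shows "card (studs_of_lec I M l) = card (shared_studs I M N l)
    + card {s \<in> studs_of_lec I M l. stu_prefers I s M N}
    + card {s \<in> studs_of_lec I M l. stu_prefers I s N M}"
proof -
  let ?L = "studs_of_lec I M l" and ?C = "shared_studs I M N l"
  let ?A = "{s \<in> ?L. stu_prefers I s M N}" and ?B = "{s \<in> ?L. stu_prefers I s N M}"
  have trichotomy: "(s \<in> ?C \<and> \<not> stu_prefers I s M N \<and> \<not> stu_prefers I s N M) \<or>
      (s \<notin> ?C \<and> (stu_prefers I s N M \<longleftrightarrow> \<not> stu_prefers I s M N))" if s: "s \<in> ?L" for s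
  proof -
    obtain p where sp: "(s, p) \<in> M" "offerer I p = l"
      using s unfolding studs_of_lec_def by blast
    have "s \<in> ?C \<longleftrightarrow> (s, p) \<in> N"
      using sp is_matching_unique[OF M] unfolding shared_studs_def by blast
    then show ?thesis
      using not_stu_prefers_same[OF M N sp(1)] not_stu_prefers_same[OF N M _ sp(1)]
        stu_prefers_swap[OF M N sp(1)] by blast
  qed
  have "?C \<subseteq> ?L"
    unfolding shared_studs_def studs_of_lec_def by blast
  then have partition: "?L = ?C \<union> (?A \<union> ?B)"
    and disjoint: "?C \<inter> (?A \<union> ?B) = {}" "?A \<inter> ?B = {}"
    using trichotomy by blast+
  have finite: "finite ?C" "finite ?A" "finite ?B"
    using finite_studs_of_lec[OF M] \<open>?C \<subseteq> ?L\<close> finite_subset by auto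
  have "card (?C \<union> (?A \<union> ?B)) = card ?C + card ?A + card ?B"
    using card_Un_disjoint[OF finite(2,3) disjoint(2)] card_Un_disjoint[OF finite(1) _ disjoint(1)] finite
    by simp
  then show ?thesis
    unfolding partition[symmetric] .
qed

lemma card_improvers_lec_le:
  assumes M: "stable I M" and N: "stable I N" and l: "l \<in> lecturers I"
  shows "card {s \<in> studs_of_lec I N l. stu_prefers I s N M}
    \<le> card {s \<in> studs_of_lec I M l. stu_prefers I s N M}"
proof -
  have mM: "is_matching I M" and mN: "is_matching I N"
    using M N by (simp_all add: stable_is_matching)
  consider (proj_full) "\<forall>q\<in>offered I l. \<forall>t. (t, q) \<in> N \<longrightarrow> stu_prefers I t N M \<longrightarrow> \<not> proj_under I M q"
    | (lec_full) q t where "q \<in> offered I l" "(t, q) \<in> N" "stu_prefers I t N M" "proj_under I M q"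
    by blast
  then show ?thesis
  proof cases
    case proj_full
    show ?thesis
    proof (rule card_studs_of_lec_filter_mono[OF mM mN])
      fix q
      assume q: "q \<in> offered I l"
      then have "q \<in> projects I"
        unfolding offered_def by blast
      then show "card {s \<in> studs_of_proj N q. stu_prefers I s N M}
          \<le> card {s \<in> studs_of_proj M q. stu_prefers I s N M}"
      proof (rule card_improvers_proj_le[OF M N])
        fix t
        assume "(t, q) \<in> N" "stu_prefers I t N M"
        then show "proj_full I M q \<and> (\<forall>u\<in>studs_of_proj M q. lec_pref I (offerer I q) u t)"
          using stable_improver_outranked[OF M mN] proj_full q by blast
      qed
    qed
  next
    case lec_full
    \<comment> \<open>Now l is full in M and ranks all of M(l) above t, so the roles of M and N can be
      swapped: l has at least as many M-improvers in N as in M, and |N(l)| <= |M(l)|.\<close>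
    then have ql: "offerer I q = l"
      unfolding offered_def by blast
    have full: "lec_full I M l" and outranked: "\<forall>u\<in>studs_of_lec I M l. lec_pref I l u t"
      using stable_improver_outranked[OF M mN lec_full(2,3)] lec_full(4) ql
      unfolding proj_full_def proj_under_def by auto
    have t: "t \<in> studs_of_lec I N l"
      using lec_full(2) ql unfolding studs_of_lec_def by blast
    have "card {s \<in> studs_of_lec I M l. stu_prefers I s M N}
        \<le> card {s \<in> studs_of_lec I N l. stu_prefers I s M N}"
    proof (rule card_studs_of_lec_filter_mono[OF mN mM])
      fix p
      assume "p \<in> offered I l"
      then have p: "p \<in> projects I" "offerer I p = l"
        unfolding offered_def by auto
      show "card {s \<in> studs_of_proj M p. stu_prefers I s M N}
          \<le> card {s \<in> studs_of_proj N p. stu_prefers I s M N}"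
      proof (rule card_improvers_proj_le[OF N M p(1)])
        fix s
        assume sp: "(s, p) \<in> M" "stu_prefers I s M N"
        then have "lec_pref I l s t"
          using outranked p(2) unfolding studs_of_lec_def by blast
        then have "\<not> (\<forall>u\<in>studs_of_lec I N l. lec_pref I l u s)"
          using t strict_total_on_asym[OF lec_pref_strict_total[OF l]] by blast
        then show "proj_full I N p \<and> (\<forall>u\<in>studs_of_proj N p. lec_pref I (offerer I p) u s)"
          using stable_improver_outranked[OF N mM sp] p(2) by blast
      qed
    qed
    moreover have "card (studs_of_lec I N l) \<le> card (studs_of_lec I M l)"
      using is_matching_lcap[OF mN l] full unfolding lec_full_def by simp
    ultimately show ?thesis
      using card_studs_of_lec_split[OF mM mN, of l] card_studs_of_lec_split[OF mN mM, of l]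
      unfolding shared_studs_commute[of I N M l] by linarith
  qed
qed

lemma studs_of_proj_meet_subset:
  assumes M: "stable I M" and N: "stable I N" and p: "p \<in> projects I"
  shows "studs_of_proj (meet I M N) p \<subseteq> studs_of_proj M p \<or>
    studs_of_proj (meet I M N) p \<subseteq> studs_of_proj N p"
proof (rule ccontr)
  have mM: "is_matching I M" and mN: "is_matching I N"
    using M N by (simp_all add: stable_is_matching)
  assume "\<not> ?thesis"
  then obtain s s' where s: "(s, p) \<in> meet I M N" "(s, p) \<notin> N"
    and s': "(s', p) \<in> meet I M N" "(s', p) \<notin> M"
    unfolding studs_of_proj_def by blast
  obtain "(s, p) \<in> M" "stu_prefers I s M N"
    using meet_cases[OF mM mN s(1)] s(2) by metis
  moreover obtain "(s', p) \<in> N" "stu_prefers I s' N M"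
    using meet_cases[OF mM mN s'(1)] s'(2) by metis
  ultimately have "lec_pref I (offerer I p) s s'" "lec_pref I (offerer I p) s' s"
    using stable_improver_outranked_proj[OF M mN] stable_improver_outranked_proj[OF N mM]
    unfolding studs_of_proj_def by blast+
  then show False
    using strict_total_on_asym[OF lec_pref_strict_total[OF offerer_in_lecturers[OF p]]] by blast
qed

lemma card_studs_of_proj_meet_le:
  assumes M: "stable I M" and N: "stable I N" and p: "p \<in> projects I"
  shows "card (studs_of_proj (meet I M N) p) \<le> pcap I p"
  using studs_of_proj_meet_subset[OF assms]
proof
  assume "studs_of_proj (meet I M N) p \<subseteq> studs_of_proj M p"
  then show ?thesis
    using card_mono[OF finite_studs_of_proj] is_matching_pcap[OF _ p] stable_is_matching[OF M]
    by (meson le_trans)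
next
  assume "studs_of_proj (meet I M N) p \<subseteq> studs_of_proj N p"
  then show ?thesis
    using card_mono[OF finite_studs_of_proj] is_matching_pcap[OF _ p] stable_is_matching[OF N]
    by (meson le_trans)
qed

lemma card_studs_of_lec_meet_le:
  assumes M: "stable I M" and N: "stable I N" and l: "l \<in> lecturers I"
  shows "card (studs_of_lec I (meet I M N) l) \<le> lcap I l"
proof -
  have mM: "is_matching I M" and mN: "is_matching I N"
    using M N by (simp_all add: stable_is_matching)
  let ?C = "shared_studs I M N l"
  let ?A = "{s \<in> studs_of_lec I M l. stu_prefers I s M N}"
  let ?V = "{s \<in> studs_of_lec I N l. stu_prefers I s N M}"
  let ?W = "{s \<in> studs_of_lec I M l. stu_prefers I s N M}"
  have "studs_of_lec I (meet I M N) l \<subseteq> ?C \<union> ?A \<union> ?V"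
  proof
    fix s
    assume "s \<in> studs_of_lec I (meet I M N) l"
    then obtain p where sp: "(s, p) \<in> meet I M N" "offerer I p = l"
      unfolding studs_of_lec_def by blast
    from meet_cases[OF mM mN sp(1)] show "s \<in> ?C \<union> ?A \<union> ?V"
      using sp(2) unfolding shared_studs_def studs_of_lec_def by cases blast+
  qed
  moreover have "?C \<union> ?A \<union> ?V \<subseteq> studs_of_lec I M l \<union> studs_of_lec I N l"
    unfolding shared_studs_def studs_of_lec_def by blast
  then have "finite (?C \<union> ?A \<union> ?V)"
    using finite_studs_of_lec[OF mM] finite_studs_of_lec[OF mN] by (meson finite_Un finite_subset)
  ultimately have "card (studs_of_lec I (meet I M N) l) \<le> card (?C \<union> ?A \<union> ?V)"
    by (rule card_mono[rotated])
  also have "\<dots> \<le> card ?C + card ?A + card ?V"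
    using card_Un_le[of "?C \<union> ?A" ?V] card_Un_le[of ?C ?A] by linarith
  also have "\<dots> \<le> card ?C + card ?A + card ?W"
    using card_improvers_lec_le[OF M N l] by linarith
  also have "\<dots> = card (studs_of_lec I M l)"
    using card_studs_of_lec_split[OF mM mN] by simp
  also have "\<dots> \<le> lcap I l"
    using is_matching_lcap[OF mM l] .
  finally show ?thesis .
qed

end

theorem lemma7:
  fixes I :: "('s, 'p, 'l) spa" and M M' :: "('s \<times> 'p) set"
  assumes "spa_instance I" and "stable I M" and "stable I M'"
  shows "is_matching I (meet I M M')"
proof -
  have M: "is_matching I M" and M': "is_matching I M'"
    using assms(2,3) by (simp_all add: stable_is_matching)
  show ?thesis
    unfolding is_matching_def
  proof (intro conjI)
    show "\<forall>(s, p)\<in>meet I M M'. acceptable_pair I s p"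
      using meet_acceptable[OF M M'] by blast
    show "\<forall>s p q. (s, p) \<in> meet I M M' \<longrightarrow> (s, q) \<in> meet I M M' \<longrightarrow> p = q"
      using meet_unique[OF assms(1) M M'] by blast
    show "\<forall>p\<in>projects I. card (studs_of_proj (meet I M M') p) \<le> pcap I p"
      using card_studs_of_proj_meet_le[OF assms] by blast
    show "\<forall>l\<in>lecturers I. card (studs_of_lec I (meet I M M') l) \<le> lcap I l"
      using card_studs_of_lec_meet_le[OF assms] by blast
  qed
qed

end
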